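(* Let $G$ be a graph, $in\colon\mathrm{dom}(G)\to D$ an inflow on $G$, and $G_1\subseteq G$ (i.e. $G=G_1\uplus G_2$ for some $G_2$). If $in_1=\mathrm{proj}(in,G)(G_1)$, then $\mathrm{flow}(in,G)|_{\mathrm{dom}(G_1)}=\mathrm{flow}(in_1,G_1)$.
   Context: Fix a flow domain $(D,\sqsubseteq,\sqcup,+,\cdot,0,1)$: a positive partially ordered $\omega$-complete semiring, i.e. $(D,\sqsubseteq)$ is an $\omega$-cpo with join $\sqcup$, $(D,+,\cdot,0,1)$ is a semiring, $+$ and $\cdot$ are continuous (preserve suprema of increasing chains), and $0$ is the least element. Fix a node label join-semilattice $(A,\sqsubseteq,\sqcup,a_e)$. A graph $G=(N,N^o,\lambda,\varepsilon)$ has a finite node set $N=\mathrm{dom}(G)$, a finite set of sinks $N^o$ disjoint from $N$, labels $\lambda\colon N\to A$, and edge function $\varepsilon\colon N\times(N\cup N^o)\to D$. The disjoint union $G_1\uplus G_2$ is defined iff $N_1\cap N_2=\emptyset$, and then equals $(N_1\cup N_2,(N_1^o\setminus N_2)\cup(N_2^o\setminus N_1),\lambda_1\uplus\lambda_2,\varepsilon')$ with $\varepsilon'(n_1,n_2)=\varepsilon_i(n_1,n_2)$ if $n_1\in N_i$ and $n_2\in N_i\cup N_i^o$ ($i=1,2$), and $0$ otherwise. $G_1\subseteq G$ iff $G=G_1\uplus G_2$ for some $G_2$. The capacity $\mathrm{cap}(G)$ is the least fixpoint of $\mathrm{cap}(G)(n,n')=\delta(n,n')+\sum_{n''\in N}\varepsilon(n,n'')\cdot\mathrm{cap}(G)(n'',n')$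 ($\delta(n,n')=1$ if $n=n'$, else $0$); the flow of an inflow $in\colon N\to D$ is $\mathrm{flow}(in,G)(n)=\sum_{n'\in N}in(n')\cdot\mathrm{cap}(G)(n',n)$ for $n\in N$. For $G=G_1\uplus G_2$ with edge function $\varepsilon$, the projection of $in$ onto $G_1$ is $\mathrm{proj}(in,G)(G_1)\colon\mathrm{dom}(G_1)\to D$, $\mathrm{proj}(in,G)(G_1)(n)=in(n)+\sum_{n'\in\mathrm{dom}(G)\setminus\mathrm{dom}(G_1)}\mathrm{flow}(in,G)(n')\cdot\varepsilon(n',n)$. *)

theory Defs
  imports Main
begin

class flow_domain = semiring_0 + monoid_mult + order +
  assumes zero_least: "0 \<le> x"
  and omega_complete: "(\<And>i. f i \<le> f (Suc i)) \<Longrightarrow> \<exists>s. (\<forall>i. f i \<le> s) \<and> (\<forall>u. (\<forall>i. f i \<le> u) \<longrightarrow> s \<le> u)"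
  and plus_cont_left: "(\<And>i. f i \<le> f (Suc i)) \<Longrightarrow> (\<forall>i. f i \<le> s) \<Longrightarrow> (\<forall>u. (\<forall>i. f i \<le> u) \<longrightarrow> s \<le> u) \<Longrightarrow> (\<forall>i. f i + a \<le> s + a) \<and> (\<forall>u. (\<forall>i. f i + a \<le> u) \<longrightarrow> s + a \<le> u)"
  and plus_cont_right: "(\<And>i. f i \<le> f (Suc i)) \<Longrightarrow> (\<forall>i. f i \<le> s) \<Longrightarrow> (\<forall>u. (\<forall>i. f i \<le> u) \<longrightarrow> s \<le> u) \<Longrightarrow> (\<forall>i. a + f i \<le> a + s) \<and> (\<forall>u. (\<forall>i. a + f i \<le> u) \<longrightarrow> a + s \<le> u)"
  and mult_cont_left: "(\<And>i. f i \<le> f (Suc i)) \<Longrightarrow> (\<forall>i. f i \<le> s) \<Longrightarrow> (\<forall>u. (\<forall>i. f i \<le> u) \<longrightarrow> s \<le> u) \<Longrightarrow> (\<forall>i. f i * a \<le> s * a) \<and> (\<forall>u. (\<forall>i. f i * a \<le> u) \<longrightarrow> s * a \<le> u)"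
  and mult_cont_right: "(\<And>i. f i \<le> f (Suc i)) \<Longrightarrow> (\<forall>i. f i \<le> s) \<Longrightarrow> (\<forall>u. (\<forall>i. f i \<le> u) \<longrightarrow> s \<le> u) \<Longrightarrow> (\<forall>i. a * f i \<le> a * s) \<and> (\<forall>u. (\<forall>i. a * f i \<le> u) \<longrightarrow> a * s \<le> u)"

text \<open>A graph (N, N^o, lambda, epsilon) with nodes of type 'n, labels of type 'a,
  edge values of type 'd. Functions are total; well-formedness fixes them
  canonically outside their domains.\<close>
datatype ('n, 'a, 'd) graph = Graph (nodes: "'n set") (sinks: "'n set")
  (lab: "'n \<Rightarrow> 'a") (edge: "'n \<Rightarrow> 'n \<Rightarrow> 'd")

definition wf_graph :: "('n, 'a, 'd::zero) graph \<Rightarrow> bool" where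
  "wf_graph G \<longleftrightarrow> finite (nodes G) \<and> finite (sinks G) \<and> nodes G \<inter> sinks G = {}
     \<and> (\<forall>n. n \<notin> nodes G \<longrightarrow> lab G n = undefined)
     \<and> (\<forall>n n'. \<not> (n \<in> nodes G \<and> n' \<in> nodes G \<union> sinks G) \<longrightarrow> edge G n n' = 0)"

text \<open>Disjoint union (meaningful iff the node sets are disjoint).\<close>
definition guplus :: "('n, 'a, 'd::zero) graph \<Rightarrow> ('n, 'a, 'd) graph \<Rightarrow> ('n, 'a, 'd) graph" where
  "guplus G1 G2 = Graph (nodes G1 \<union> nodes G2)
     ((sinks G1 - nodes G2) \<union> (sinks G2 - nodes G1))
     (\<lambda>n. if n \<in> nodes G1 then lab G1 n else if n \<in> nodes G2 then lab G2 n else undefined)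
     (\<lambda>n n'. if n \<in> nodes G1 \<and> n' \<in> nodes G1 \<union> sinks G1 then edge G1 n n'
             else if n \<in> nodes G2 \<and> n' \<in> nodes G2 \<union> sinks G2 then edge G2 n n' else 0)"

definition uplus_defined :: "('n, 'a, 'd) graph \<Rightarrow> ('n, 'a, 'd) graph \<Rightarrow> bool" where
  "uplus_defined G1 G2 \<longleftrightarrow> nodes G1 \<inter> nodes G2 = {}"

definition subgraph :: "('n, 'a, 'd::zero) graph \<Rightarrow> ('n, 'a, 'd) graph \<Rightarrow> bool" where
  "subgraph G1 G \<longleftrightarrow> (\<exists>G2. wf_graph G2 \<and> uplus_defined G1 G2 \<and> G = guplus G1 G2)"

definition delta :: "'n \<Rightarrow> 'n \<Rightarrow> 'd::{zero,one}" where
  "delta n n' = (if n = n' then 1 else 0)"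

definition cap_eq :: "('n, 'a, 'd::flow_domain) graph \<Rightarrow> ('n \<Rightarrow> 'n \<Rightarrow> 'd) \<Rightarrow> bool" where
  "cap_eq G c \<longleftrightarrow> (\<forall>n\<in>nodes G. \<forall>n'\<in>nodes G.
      c n n' = delta n n' + (\<Sum>n''\<in>nodes G. edge G n n'' * c n'' n'))"

definition is_cap :: "('n, 'a, 'd::flow_domain) graph \<Rightarrow> ('n \<Rightarrow> 'n \<Rightarrow> 'd) \<Rightarrow> bool" where
  "is_cap G c \<longleftrightarrow> cap_eq G c
     \<and> (\<forall>c'. cap_eq G c' \<longrightarrow> (\<forall>n\<in>nodes G. \<forall>n'\<in>nodes G. c n n' \<le> c' n n'))
     \<and> (\<forall>n n'. n \<notin> nodes G \<or> n' \<notin> nodes G \<longrightarrow> c n n' = 0)"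

definition cap :: "('n, 'a, 'd::flow_domain) graph \<Rightarrow> 'n \<Rightarrow> 'n \<Rightarrow> 'd" where
  "cap G = (THE c. is_cap G c)"

definition flow :: "('n \<Rightarrow> 'd::flow_domain) \<Rightarrow> ('n, 'a, 'd) graph \<Rightarrow> 'n \<Rightarrow> 'd" where
  "flow infl G n = (\<Sum>n'\<in>nodes G. infl n' * cap G n' n)"

definition proj :: "('n \<Rightarrow> 'd::flow_domain) \<Rightarrow> ('n, 'a, 'd) graph \<Rightarrow> ('n, 'a, 'd) graph \<Rightarrow> 'n \<Rightarrow> 'd" where
  "proj infl G G1 n = infl n + (\<Sum>n'\<in>nodes G - nodes G1. flow infl G n' * edge G n' n)"

end

theory Submission
  imports Defs
begin

text \<open>By continuity, \<open>cap G\<close> is the supremum of the Kleene iterates of its equation, and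
  consequently \<open>flow in G\<close> is the least (pre-)fixpoint of \<open>f = in + f \<cdot> E\<close>. The flow of \<open>G\<close>,
  restricted to \<open>G1\<close>, solves the flow equation of \<open>G1\<close> for the projected inflow, so it
  dominates \<open>flow in1 G1\<close>. Conversely, overwriting the flow of \<open>G\<close> on \<open>G1\<close> by \<open>flow in1 G1\<close>
  yields a pre-fixpoint of the equation of \<open>G\<close>, so by leastness the flow of \<open>G\<close> is dominated
  by it on \<open>G1\<close>.\<close>

lemma (in order) two_step_chain:
  assumes "a \<le> b"
  defines "f \<equiv> \<lambda>i::nat. if i = 0 then a else b"
  shows "f i \<le> f (Suc i)" and "\<forall>i. f i \<le> b" and "\<forall>u. (\<forall>i. f i \<le> u) \<longrightarrow> b \<le> u"
  using assms by (auto dest: spec[of _ 1])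

context flow_domain
begin

text \<open>Monotonicity of the operations is not an axiom: it follows from continuity applied to the
  chain \<open>a, b, b, \<dots>\<close>.\<close>

lemma add_left_mono_flow_domain: "a \<le> b \<Longrightarrow> c + a \<le> c + b"
  using conjunct1[OF plus_cont_right[OF two_step_chain], of a b c] by (metis (full_types))

lemma mult_left_mono_flow_domain: "a \<le> b \<Longrightarrow> c * a \<le> c * b"
  using conjunct1[OF mult_cont_right[OF two_step_chain], of a b c] by (metis (full_types))

lemma mult_right_mono_flow_domain: "a \<le> b \<Longrightarrow> a * c \<le> b * c"
  using conjunct1[OF mult_cont_left[OF two_step_chain], of a b c] by (metis (full_types))

end

subclass (in flow_domain) ordered_semiring_0
  by standard (simp_all add: add_left_mono_flow_domain mult_left_mono_flow_domain
      mult_right_mono_flow_domain)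

definition lub_seq :: "(nat \<Rightarrow> 'a::order) \<Rightarrow> 'a \<Rightarrow> bool" where
  "lub_seq f s \<longleftrightarrow> (\<forall>i. f i \<le> s) \<and> (\<forall>u. (\<forall>i. f i \<le> u) \<longrightarrow> s \<le> u)"

lemma lub_seq_unique: "lub_seq f s \<Longrightarrow> lub_seq f t \<Longrightarrow> s = t"
  unfolding lub_seq_def by (meson order.antisym)

lemma lub_seq_upper: "lub_seq f s \<Longrightarrow> f i \<le> s"
  unfolding lub_seq_def by blast

lemma lub_seq_least: "lub_seq f s \<Longrightarrow> (\<And>i. f i \<le> u) \<Longrightarrow> s \<le> u"
  unfolding lub_seq_def by blast

lemma lub_seq_const: "lub_seq (\<lambda>i. a) a"
  unfolding lub_seq_def by simp

lemma lub_seq_Suc: "mono f \<Longrightarrow> lub_seq f s \<Longrightarrow> lub_seq (\<lambda>i. f (Suc i)) s"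
  unfolding lub_seq_def mono_iff_le_Suc by (meson order.trans)

lemma lub_seq_exists: "mono (f :: nat \<Rightarrow> 'd::flow_domain) \<Longrightarrow> \<exists>s. lub_seq f s"
  unfolding lub_seq_def mono_iff_le_Suc using omega_complete by blast

lemma lub_seq_add_left:
  "mono f \<Longrightarrow> lub_seq f s \<Longrightarrow> lub_seq (\<lambda>i. a + f i) (a + (s :: 'd::flow_domain))"
  using plus_cont_right unfolding lub_seq_def mono_iff_le_Suc by blast

lemma lub_seq_mult_left:
  "mono f \<Longrightarrow> lub_seq f s \<Longrightarrow> lub_seq (\<lambda>i. a * f i) (a * (s :: 'd::flow_domain))"
  using mult_cont_right unfolding lub_seq_def mono_iff_le_Suc by blast

lemma lub_seq_mult_right:
  "mono f \<Longrightarrow> lub_seq f s \<Longrightarrow> lub_seq (\<lambda>i. f i * a) ((s :: 'd::flow_domain) * a)"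
  using mult_cont_left unfolding lub_seq_def mono_iff_le_Suc by blast

lemma lub_seq_add:
  fixes f g :: "nat \<Rightarrow> 'd::flow_domain"
  assumes "mono f" "mono g" and f: "lub_seq f s" and g: "lub_seq g t"
  shows "lub_seq (\<lambda>i. f i + g i) (s + t)"
  unfolding lub_seq_def
proof (intro conjI allI impI)
  show "f i + g i \<le> s + t" for i
    using f g by (intro add_mono lub_seq_upper)
next
  fix u assume u: "\<forall>i. f i + g i \<le> u"
  text \<open>The mixed sums \<open>f i + g j\<close> are bounded through the diagonal index \<open>max i j\<close>, after
    which the two arguments can be passed to the limit one at a time.\<close>
  have "f i + g j \<le> u" for i j
    using u add_mono[OF monoD[OF \<open>mono f\<close>] monoD[OF \<open>mono g\<close>], of i "max i j" j "max i j"]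
    by (meson max.cobounded1 max.cobounded2 order.trans)
  then have "s + g j \<le> u" for j
    using plus_cont_left[of f s "g j"] \<open>mono f\<close> f unfolding lub_seq_def mono_iff_le_Suc by blast
  then show "s + t \<le> u"
    using plus_cont_right[of g t s] \<open>mono g\<close> g unfolding lub_seq_def mono_iff_le_Suc by blast
qed

lemma mono_mult_left: "mono f \<Longrightarrow> mono (\<lambda>i. a * (f i :: 'd::flow_domain))"
  by (simp add: mono_def mult_left_mono zero_least)

lemma mono_mult_right: "mono f \<Longrightarrow> mono (\<lambda>i. (f i :: 'd::flow_domain) * a)"
  by (simp add: mono_def mult_right_mono zero_least)

lemma mono_sum: "(\<And>x. x \<in> A \<Longrightarrow> mono (f x)) \<Longrightarrow> mono (\<lambda>i. \<Sum>x\<in>A. (f x i :: 'd::flow_domain))"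
  by (simp add: mono_def sum_mono)

lemma lub_seq_sum:
  fixes f :: "'b \<Rightarrow> nat \<Rightarrow> 'd::flow_domain"
  assumes "finite A" and "\<And>x. x \<in> A \<Longrightarrow> mono (f x)" and "\<And>x. x \<in> A \<Longrightarrow> lub_seq (f x) (s x)"
  shows "lub_seq (\<lambda>i. \<Sum>x\<in>A. f x i) (\<Sum>x\<in>A. s x)"
  using assms
proof (induction A rule: finite_induct)
  case empty
  show ?case by (simp add: lub_seq_const)
next
  case (insert x A)
  then show ?case
    by (simp add: lub_seq_add mono_sum)
qed

lemma sum_delta_left: "finite A \<Longrightarrow> n \<in> A \<Longrightarrow> (\<Sum>m\<in>A. delta n m * (f m :: 'd::{semiring_0,monoid_mult})) = f n"
  by (simp add: delta_def if_distrib[of "\<lambda>x. x * _"] cong: if_cong)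

lemma sum_delta_right: "finite A \<Longrightarrow> n \<in> A \<Longrightarrow> (\<Sum>m\<in>A. (f m :: 'd::{semiring_0,monoid_mult}) * delta m n) = f n"
  by (simp add: delta_def if_distrib[of "\<lambda>x. _ * x"] cong: if_cong)

primrec cap_approx :: "('n, 'a, 'd::flow_domain) graph \<Rightarrow> nat \<Rightarrow> 'n \<Rightarrow> 'n \<Rightarrow> 'd" where
  "cap_approx G 0 = (\<lambda>n n'. 0)"
| "cap_approx G (Suc k) = (\<lambda>n n'. delta n n' + (\<Sum>n''\<in>nodes G. edge G n n'' * cap_approx G k n'' n'))"

lemma mono_cap_approx: "mono (\<lambda>k. cap_approx G k n n')"
  unfolding mono_iff_le_Suc
proof
  show "cap_approx G k n n' \<le> cap_approx G (Suc k) n n'" for k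
  proof (induction k arbitrary: n)
    case 0
    show ?case by (simp add: zero_least)
  next
    case (Suc k)
    then show ?case
      by (simp only: cap_approx.simps) (intro add_left_mono sum_mono mult_left_mono zero_least)
  qed
qed

lemma cap_approx_le_solution:
  assumes "cap_eq G c" and "n \<in> nodes G" and "n' \<in> nodes G"
  shows "cap_approx G k n n' \<le> c n n'"
  using assms(2)
proof (induction k arbitrary: n)
  case 0
  show ?case by (simp add: zero_least)
next
  case (Suc k)
  have "cap_approx G (Suc k) n n' \<le> delta n n' + (\<Sum>n''\<in>nodes G. edge G n n'' * c n'' n')"
    using Suc.IH by (simp only: cap_approx.simps) (intro add_left_mono sum_mono mult_left_mono zero_least)
  also have "\<dots> = c n n'"
    using assms(1,3) Suc.prems unfolding cap_eq_def by simp
  finally show ?case .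
qed

lemma cap_eq_if_lub_seq_cap_approx:
  assumes "finite (nodes G)"
    and lub: "\<And>n n'. n \<in> nodes G \<Longrightarrow> n' \<in> nodes G \<Longrightarrow> lub_seq (\<lambda>k. cap_approx G k n n') (c n n')"
  shows "cap_eq G c"
  unfolding cap_eq_def
proof (intro ballI)
  fix n n' assume n: "n \<in> nodes G" and n': "n' \<in> nodes G"
  have "lub_seq (\<lambda>k. \<Sum>n''\<in>nodes G. edge G n n'' * cap_approx G k n'' n')
        (\<Sum>n''\<in>nodes G. edge G n n'' * c n'' n')"
    using assms(1) by (intro lub_seq_sum lub_seq_mult_left mono_mult_left mono_cap_approx lub n')
  then have "lub_seq (\<lambda>k. cap_approx G (Suc k) n n') (delta n n' + (\<Sum>n''\<in>nodes G. edge G n n'' * c n'' n'))"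
    by (simp add: lub_seq_add_left mono_sum mono_mult_left mono_cap_approx)
  moreover have "lub_seq (\<lambda>k. cap_approx G (Suc k) n n') (c n n')"
    by (rule lub_seq_Suc[OF mono_cap_approx lub[OF n n']])
  ultimately show "c n n' = delta n n' + (\<Sum>n''\<in>nodes G. edge G n n'' * c n'' n')"
    using lub_seq_unique by blast
qed

lemma is_cap_unique:
  assumes "is_cap G c" and "is_cap G c'"
  shows "c = c'"
proof (intro ext)
  show "c n n' = c' n n'" for n n'
    using assms unfolding is_cap_def by (cases "n \<in> nodes G \<and> n' \<in> nodes G") (auto intro: order.antisym)
qed

lemma lub_seq_cap:
  assumes "finite (nodes G)" and "n \<in> nodes G" and "n' \<in> nodes G"
  shows "lub_seq (\<lambda>k. cap_approx G k n n') (cap G n n')"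
proof -
  define c where "c n n' = (if n \<in> nodes G \<and> n' \<in> nodes G
      then THE s. lub_seq (\<lambda>k. cap_approx G k n n') s else 0)" for n n'
  have lub: "lub_seq (\<lambda>k. cap_approx G k n n') (c n n')"
    if "n \<in> nodes G" "n' \<in> nodes G" for n n'
  proof -
    obtain s where s: "lub_seq (\<lambda>k. cap_approx G k n n') s"
      using lub_seq_exists[OF mono_cap_approx[of G n n']] by blast
    then have "c n n' = s"
      unfolding c_def using that by (auto intro: lub_seq_unique)
    with s show ?thesis by simp
  qed
  have "is_cap G c"
    unfolding is_cap_def
  proof (intro conjI allI impI ballI)
    show "cap_eq G c"
      using assms(1) lub by (rule cap_eq_if_lub_seq_cap_approx)
    show "c n n' \<le> c' n n'" if "cap_eq G c'" "n \<in> nodes G" "n' \<in> nodes G" for c' n n'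
      using that by (blast intro: lub_seq_least lub cap_approx_le_solution)
    show "c n n' = 0" if "n \<notin> nodes G \<or> n' \<notin> nodes G" for n n'
      using that by (auto simp: c_def)
  qed
  then have "cap G = c"
    unfolding cap_def using is_cap_unique by blast
  with lub assms(2,3) show ?thesis by simp
qed

text \<open>The \<open>k\<close>-th iterate sums the weights of all paths with fewer than \<open>k\<close> edges, so it can
  equally be unfolded at the last edge instead of the first.\<close>

lemma cap_approx_edge_comm:
  assumes fin: "finite (nodes G)" and "n \<in> nodes G" and n': "n' \<in> nodes G"
  shows "(\<Sum>m\<in>nodes G. cap_approx G k n m * edge G m n') = (\<Sum>m\<in>nodes G. edge G n m * cap_approx G k m n')"
  using assms(2)
proof (induction k arbitrary: n)
  case 0
  show ?case by simp
next
  case (Suc k)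
  have "(\<Sum>m\<in>nodes G. cap_approx G (Suc k) n m * edge G m n')
      = (\<Sum>m\<in>nodes G. delta n m * edge G m n')
        + (\<Sum>m\<in>nodes G. (\<Sum>l\<in>nodes G. edge G n l * cap_approx G k l m) * edge G m n')"
    by (simp add: distrib_right sum.distrib)
  also have "\<dots> = edge G n n' + (\<Sum>m\<in>nodes G. \<Sum>l\<in>nodes G. edge G n l * cap_approx G k l m * edge G m n')"
    using fin Suc.prems by (simp add: sum_delta_left sum_distrib_right)
  also have "\<dots> = edge G n n' + (\<Sum>l\<in>nodes G. edge G n l * (\<Sum>m\<in>nodes G. cap_approx G k l m * edge G m n'))"
    by (subst sum.swap) (simp add: sum_distrib_left mult.assoc)
  also have "\<dots> = edge G n n' + (\<Sum>l\<in>nodes G. edge G n l * (\<Sum>m\<in>nodes G. edge G l m * cap_approx G k m n'))"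
    using Suc.IH by simp
  also have "\<dots> = (\<Sum>l\<in>nodes G. edge G n l * cap_approx G (Suc k) l n')"
    using fin n' by (simp add: distrib_left sum.distrib sum_delta_right)
  finally show ?case .
qed

lemma cap_approx_Suc_right:
  assumes "finite (nodes G)" and "n \<in> nodes G" and "n' \<in> nodes G"
  shows "cap_approx G (Suc k) n n' = delta n n' + (\<Sum>m\<in>nodes G. cap_approx G k n m * edge G m n')"
  using cap_approx_edge_comm[OF assms] by simp

definition flow_approx :: "('n \<Rightarrow> 'd::flow_domain) \<Rightarrow> ('n, 'a, 'd) graph \<Rightarrow> nat \<Rightarrow> 'n \<Rightarrow> 'd" where
  "flow_approx infl G k n = (\<Sum>n'\<in>nodes G. infl n' * cap_approx G k n' n)"

lemma mono_flow_approx: "mono (\<lambda>k. flow_approx infl G k n)"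
  unfolding flow_approx_def by (intro mono_sum mono_mult_left mono_cap_approx)

lemma flow_approx_Suc:
  assumes fin: "finite (nodes G)" and n: "n \<in> nodes G"
  shows "flow_approx infl G (Suc k) n = infl n + (\<Sum>m\<in>nodes G. flow_approx infl G k m * edge G m n)"
proof -
  have "flow_approx infl G (Suc k) n
      = (\<Sum>n'\<in>nodes G. infl n' * (delta n' n + (\<Sum>m\<in>nodes G. cap_approx G k n' m * edge G m n)))"
    unfolding flow_approx_def using cap_approx_Suc_right[OF fin _ n] by simp
  also have "\<dots> = infl n + (\<Sum>n'\<in>nodes G. \<Sum>m\<in>nodes G. infl n' * cap_approx G k n' m * edge G m n)"
    using fin n by (simp add: distrib_left sum.distrib sum_delta_right sum_distrib_left mult.assoc)
  also have "\<dots> = infl n + (\<Sum>m\<in>nodes G. flow_approx infl G k m * edge G m n)"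
    unfolding flow_approx_def by (subst sum.swap) (simp add: sum_distrib_right)
  finally show ?thesis .
qed

lemma lub_seq_flow:
  assumes "finite (nodes G)" and "n \<in> nodes G"
  shows "lub_seq (\<lambda>k. flow_approx infl G k n) (flow infl G n)"
  unfolding flow_approx_def flow_def
  using assms by (intro lub_seq_sum lub_seq_mult_left mono_mult_left mono_cap_approx lub_seq_cap)

lemma flow_unfold:
  assumes fin: "finite (nodes G)" and n: "n \<in> nodes G"
  shows "flow infl G n = infl n + (\<Sum>m\<in>nodes G. flow infl G m * edge G m n)"
proof -
  have "lub_seq (\<lambda>k. flow_approx infl G (Suc k) n) (infl n + (\<Sum>m\<in>nodes G. flow infl G m * edge G m n))"
    unfolding flow_approx_Suc[OF fin n] using fin
    by (intro lub_seq_add_left lub_seq_sum lub_seq_mult_right mono_sum mono_mult_right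
        mono_flow_approx lub_seq_flow)
  moreover have "lub_seq (\<lambda>k. flow_approx infl G (Suc k) n) (flow infl G n)"
    by (rule lub_seq_Suc[OF mono_flow_approx lub_seq_flow[OF fin n]])
  ultimately show ?thesis
    using lub_seq_unique by metis
qed

lemma flow_le_prefixpoint:
  assumes fin: "finite (nodes G)"
    and pre: "\<And>n. n \<in> nodes G \<Longrightarrow> infl n + (\<Sum>m\<in>nodes G. x m * edge G m n) \<le> x n"
    and n: "n \<in> nodes G"
  shows "flow infl G n \<le> x n"
proof -
  have "flow_approx infl G k n \<le> x n" if "n \<in> nodes G" for k n
    using that
  proof (induction k arbitrary: n)
    case 0
    show ?case by (simp add: flow_approx_def zero_least)
  next
    case (Suc k)
    have "flow_approx infl G (Suc k) n = infl n + (\<Sum>m\<in>nodes G. flow_approx infl G k m * edge G m n)"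
      using fin Suc.prems by (rule flow_approx_Suc)
    also have "\<dots> \<le> infl n + (\<Sum>m\<in>nodes G. x m * edge G m n)"
      using Suc.IH by (intro add_left_mono sum_mono mult_right_mono zero_least)
    also have "\<dots> \<le> x n"
      using Suc.prems by (rule pre)
    finally show ?case .
  qed
  then show ?thesis
    using lub_seq_least[OF lub_seq_flow[OF fin n]] n by blast
qed

lemma flow_restrict:
  fixes G G1 :: "('n, 'a, 'd::flow_domain) graph"
  assumes fin: "finite (nodes G)" and sub: "nodes G1 \<subseteq> nodes G"
    and edge: "\<And>m n. m \<in> nodes G1 \<Longrightarrow> n \<in> nodes G1 \<Longrightarrow> edge G1 m n = edge G m n"
    and n: "n \<in> nodes G1"
  shows "flow infl G n = flow (proj infl G G1) G1 n"
proof -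
  define f where "f = flow infl G"
  define g where "g = flow (proj infl G G1) G1"
  have fin1: "finite (nodes G1)"
    using sub fin by (rule finite_subset)
  text \<open>At a node of \<open>G1\<close>, the flow equation of \<open>G\<close> splits into the contribution of \<open>G1\<close>
    and the inflow arriving from outside \<open>G1\<close>; the projected inflow is exactly the latter
    for the flow of \<open>G\<close>.\<close>
  have split: "infl n + (\<Sum>m\<in>nodes G. x m * edge G m n)
      = (infl n + (\<Sum>m\<in>nodes G - nodes G1. x m * edge G m n)) + (\<Sum>m\<in>nodes G1. x m * edge G1 m n)"
    if "n \<in> nodes G1" for x n
  proof -
    have "(\<Sum>m\<in>nodes G1. x m * edge G1 m n) = (\<Sum>m\<in>nodes G1. x m * edge G m n)"
      using edge that by simp
    then show ?thesis
      by (simp add: sum.subset_diff[OF sub fin] add.assoc)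
  qed
  have proj: "proj infl G G1 n = infl n + (\<Sum>m\<in>nodes G - nodes G1. f m * edge G m n)" for n
    unfolding proj_def f_def ..
  have g_le_f: "g n \<le> f n" if "n \<in> nodes G1" for n
    unfolding g_def
  proof (rule flow_le_prefixpoint[OF fin1 _ that])
    show "proj infl G G1 n + (\<Sum>m\<in>nodes G1. f m * edge G1 m n) \<le> f n" if "n \<in> nodes G1" for n
    proof -
      have "f n = infl n + (\<Sum>m\<in>nodes G. f m * edge G m n)"
        unfolding f_def using fin sub that by (intro flow_unfold) auto
      also have "\<dots> = proj infl G G1 n + (\<Sum>m\<in>nodes G1. f m * edge G1 m n)"
        unfolding split[OF that] proj ..
      finally show ?thesis by simp
    qed
  qed
  define x where "x m = (if m \<in> nodes G1 then g m else f m)" for m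
  have "infl n + (\<Sum>m\<in>nodes G. x m * edge G m n) \<le> x n" if "n \<in> nodes G" for n
  proof (cases "n \<in> nodes G1")
    case True
    have "infl n + (\<Sum>m\<in>nodes G. x m * edge G m n)
        = proj infl G G1 n + (\<Sum>m\<in>nodes G1. g m * edge G1 m n)"
      using split[OF True, of x] unfolding proj x_def by simp
    also have "\<dots> = x n"
      using flow_unfold[OF fin1 True] True by (simp add: g_def x_def)
    finally show ?thesis by simp
  next
    case False
    have "infl n + (\<Sum>m\<in>nodes G. x m * edge G m n) \<le> infl n + (\<Sum>m\<in>nodes G. f m * edge G m n)"
      using g_le_f unfolding x_def by (intro add_left_mono sum_mono mult_right_mono zero_least) simp
    also have "\<dots> = x n"
      using flow_unfold[OF fin that] False by (simp add: f_def x_def)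
    finally show ?thesis .
  qed
  then have "f n \<le> x n"
    unfolding f_def using fin n sub by (intro flow_le_prefixpoint) auto
  with g_le_f[OF n] n show ?thesis
    unfolding x_def f_def g_def by (simp add: order.antisym)
qed

theorem mainTheorem3:
  fixes G G1 :: "('n, 'a::semilattice_sup, 'd::flow_domain) graph"
    and infl infl1 :: "'n \<Rightarrow> 'd"
  assumes "wf_graph G1"
    and "subgraph G1 G"
    and "infl1 = proj infl G G1"
  shows "\<forall>n\<in>nodes G1. flow infl G n = flow infl1 G1 n"
proof
  obtain G2 where "wf_graph G2" and G: "G = guplus G1 G2"
    using assms(2) unfolding subgraph_def by blast
  then have "finite (nodes G)"
    using assms(1) unfolding wf_graph_def guplus_def by simp
  moreover have "nodes G1 \<subseteq> nodes G"
    unfolding G guplus_def by simp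
  moreover have "edge G1 m n = edge G m n" if "m \<in> nodes G1" "n \<in> nodes G1" for m n
    using that unfolding G guplus_def by simp
  ultimately show "flow infl G n = flow infl1 G1 n" if "n \<in> nodes G1" for n
    unfolding assms(3) using that by (rule flow_restrict)
qed

end
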